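(* The scalar equation $x'=-x-x^2-\tfrac14=-\bigl(x+\tfrac12\bigr)^2$ does not have the conditional Lipschitz shadowing property in $[-\tfrac12,\tfrac12]$ (and hence not in $[-\tfrac12,\infty)$), whereas it has the conditional Lipschitz shadowing property in $[-\rho,\rho]$ for every $\rho\in(0,\tfrac12)$.
   Context: For continuous $g\colon[0,\infty)\times\mathbb R\to\mathbb R$ and $\tau\in(0,\infty]$, a pseudosolution of $x'=g(t,x)$ on $[0,\tau)$ is a $C^1$ map $y\colon[0,\tau)\to\mathbb R$ with $\sigma_y:=\sup_{0\le t<\tau}|y'(t)-g(t,y(t))|<\infty$. The equation has the conditional Lipschitz shadowing property in $H\neq\emptyset$ if there exist $\varepsilon_0,\kappa>0$ such that whenever $0<\varepsilon\le\varepsilon_0$ and $y$ is a pseudosolution on $[0,\tau)$ ($\tau\in(0,\infty]$) with $\sigma_y\le\varepsilon$ and $y(t)\in H$ for all $t\in[0,\tau)$, there is a solution $x$ of the equation defined on $[0,\tau)$ with $\sup_{0\le t<\tau}|x(t)-y(t)|\le\kappa\varepsilon$. *)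

theory Defs
  imports "HOL-Analysis.Analysis" "HOL-Library.Extended_Real"
begin

definition dom_int :: "ereal \<Rightarrow> real set" where
  "dom_int tau = {t. 0 \<le> t \<and> ereal t < tau}"

definition C1_on_int :: "ereal \<Rightarrow> (real \<Rightarrow> real) \<Rightarrow> (real \<Rightarrow> real) \<Rightarrow> bool" where
  "C1_on_int tau y y' \<longleftrightarrow>
     (\<forall>t\<in>dom_int tau. (y has_real_derivative y' t) (at t within dom_int tau)) \<and>
     continuous_on (dom_int tau) y'"

definition pseudosolution :: "(real \<Rightarrow> real \<Rightarrow> real) \<Rightarrow> ereal \<Rightarrow> (real \<Rightarrow> real) \<Rightarrow> (real \<Rightarrow> real) \<Rightarrow> bool" where
  "pseudosolution g tau y y' \<longleftrightarrow> C1_on_int tau y y' \<and>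
     bdd_above ((\<lambda>t. \<bar>y' t - g t (y t)\<bar>) ` dom_int tau)"

definition sigma :: "(real \<Rightarrow> real \<Rightarrow> real) \<Rightarrow> ereal \<Rightarrow> (real \<Rightarrow> real) \<Rightarrow> (real \<Rightarrow> real) \<Rightarrow> real" where
  "sigma g tau y y' = (SUP t\<in>dom_int tau. \<bar>y' t - g t (y t)\<bar>)"

definition is_solution :: "(real \<Rightarrow> real \<Rightarrow> real) \<Rightarrow> ereal \<Rightarrow> (real \<Rightarrow> real) \<Rightarrow> bool" where
  "is_solution g tau x \<longleftrightarrow>
     (\<forall>t\<in>dom_int tau. (x has_real_derivative g t (x t)) (at t within dom_int tau))"

definition cond_lip_shadowing :: "(real \<Rightarrow> real \<Rightarrow> real) \<Rightarrow> real set \<Rightarrow> bool" where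
  "cond_lip_shadowing g H \<longleftrightarrow> H \<noteq> {} \<and>
     (\<exists>eps0>0. \<exists>kappa>0. \<forall>eps tau y y'.
        0 < eps \<and> eps \<le> eps0 \<and> 0 < tau \<and>
        pseudosolution g tau y y' \<and> sigma g tau y y' \<le> eps \<and>
        (\<forall>t\<in>dom_int tau. y t \<in> H)
        \<longrightarrow> (\<exists>x. is_solution g tau x \<and>
               (\<forall>t\<in>dom_int tau. \<bar>x t - y t\<bar> \<le> kappa * eps)))"

end

theory Submission
  imports Defs
begin

text \<open>With \<open>u = x + 1/2\<close> the equation reads \<open>u' = -u\<^sup>2\<close>, whose solutions \<open>u\<^sub>0 / (1 + u\<^sub>0 t)\<close>
  tend to the degenerate equilibrium \<open>u = 0\<close> only like \<open>1/t\<close>. Away from it, i.e. for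
  \<open>u \<ge> a > 0\<close>, the right-hand side is dissipative with rate \<open>a\<close>, so \<open>(x - y)\<^sup>2\<close> cannot exceed
  \<open>(\<epsilon>/a)\<^sup>2\<close> for the solution \<open>x\<close> starting at the pseudosolution \<open>y\<close>. At the equilibrium this
  fails: the constant \<open>u = d\<close> is a pseudosolution with error \<open>d\<^sup>2\<close>, but every true solution
  staying above \<open>u = d/2\<close> drifts down at speed at least \<open>d\<^sup>2/4\<close>, so none stays within
  \<open>\<kappa> d\<^sup>2 \<le> d/2\<close> of it.\<close>

lemma at_within_dom_int_interior:
  assumes "0 < t" "ereal t < tau"
  shows "at t within dom_int tau = at t"
proof -
  obtain z where z: "t < z" "ereal z < tau" using ereal_dense2[OF assms(2)] by auto
  have "{0<..<z} \<subseteq> dom_int tau"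
    using z(2) unfolding dom_int_def by (auto intro: order.strict_trans[of _ "ereal z"])
  then have "{0<..<z} \<subseteq> interior (dom_int tau)" by (rule interior_maximal) simp
  then have "t \<in> interior (dom_int tau)" using assms(1) z(1) by auto
  then show ?thesis by (rule at_within_interior)
qed

lemma dom_int_le_if_deriv_neg_above:
  fixes w :: "real \<Rightarrow> real"
  assumes T: "T \<in> dom_int tau"
    and der: "\<And>t. t \<in> dom_int tau \<Longrightarrow> (w has_real_derivative w' t) (at t within dom_int tau)"
    and start: "w 0 \<le> M"
    and neg: "\<And>t. t \<in> dom_int tau \<Longrightarrow> M < w t \<Longrightarrow> w' t < 0"
  shows "w T \<le> M"
proof (rule ccontr)
  assume "\<not> w T \<le> M"
  have sub: "{0..T} \<subseteq> dom_int tau"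
    using T unfolding dom_int_def by (auto intro: order.strict_trans1[of _ "ereal T"])
  have "continuous_on {0..T} w"
    using der sub DERIV_continuous continuous_on_eq_continuous_within continuous_on_subset
    by metis
  then obtain m where m: "m \<in> {0..T}" and max: "\<And>s. s \<in> {0..T} \<Longrightarrow> w s \<le> w m"
    using continuous_attains_sup[of "{0..T}" w] T unfolding dom_int_def by auto
  have above: "M < w m" using max[of T] \<open>\<not> w T \<le> M\<close> T unfolding dom_int_def by auto
  then have "0 < m" using start m by (cases "m = 0") auto
  have mdom: "m \<in> dom_int tau" using m sub by auto
  then have "(w has_real_derivative w' m) (at m)"
    using der at_within_dom_int_interior[OF \<open>0 < m\<close>] unfolding dom_int_def by force
  then obtain d where "0 < d" and left: "\<And>h. 0 < h \<Longrightarrow> h < d \<Longrightarrow> w m < w (m - h)"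
    using DERIV_neg_dec_left neg[OF mdom above] by blast
  have "w m < w (m - min (d/2) m)" using left \<open>0 < d\<close> \<open>0 < m\<close> by simp
  moreover have "m - min (d/2) m \<in> {0..T}" using m \<open>0 < d\<close> by auto
  ultimately show False using max by fastforce
qed

lemma pseudosolution_defect_le_sigma:
  assumes "pseudosolution g tau y y'" "t \<in> dom_int tau"
  shows "\<bar>y' t - g t (y t)\<bar> \<le> sigma g tau y y'"
  using assms unfolding sigma_def pseudosolution_def by (intro cSUP_upper) auto

lemma pseudosolution_const:
  assumes "0 < tau" "\<And>t. g t c = v"
  shows "pseudosolution g tau (\<lambda>_. c) (\<lambda>_. 0)" "sigma g tau (\<lambda>_. c) (\<lambda>_. 0) = \<bar>v\<bar>"
proof -
  have "0 \<in> dom_int tau" using assms(1) unfolding dom_int_def by (simp add: zero_ereal_def)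
  then show "sigma g tau (\<lambda>_. c) (\<lambda>_. 0) = \<bar>v\<bar>"
    unfolding sigma_def assms(2) by (subst cSUP_const) auto
  show "pseudosolution g tau (\<lambda>_. c) (\<lambda>_. 0)"
    unfolding pseudosolution_def C1_on_int_def assms(2) by auto
qed

lemma cond_lip_shadowing_subset:
  assumes "cond_lip_shadowing g H'" "H \<subseteq> H'" "H \<noteq> {}"
  shows "cond_lip_shadowing g H"
proof -
  obtain eps0 kappa where "0 < eps0" "0 < kappa" and shadow: "\<And>eps tau y y'.
        0 < eps \<and> eps \<le> eps0 \<and> 0 < tau \<and> pseudosolution g tau y y' \<and> sigma g tau y y' \<le> eps \<and>
        (\<forall>t\<in>dom_int tau. y t \<in> H') \<Longrightarrow>
        \<exists>x. is_solution g tau x \<and> (\<forall>t\<in>dom_int tau. \<bar>x t - y t\<bar> \<le> kappa * eps)"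
    using assms(1) unfolding cond_lip_shadowing_def by blast
  have "\<forall>eps tau y y'.
        0 < eps \<and> eps \<le> eps0 \<and> 0 < tau \<and> pseudosolution g tau y y' \<and> sigma g tau y y' \<le> eps \<and>
        (\<forall>t\<in>dom_int tau. y t \<in> H) \<longrightarrow>
        (\<exists>x. is_solution g tau x \<and> (\<forall>t\<in>dom_int tau. \<bar>x t - y t\<bar> \<le> kappa * eps))"
    using assms(2) by (blast intro: shadow)
  then show ?thesis
    unfolding cond_lip_shadowing_def using assms(3) \<open>0 < eps0\<close> \<open>0 < kappa\<close> by blast
qed

text \<open>The squared distance has negative derivative as soon as it exceeds \<open>(\<epsilon>/a)\<^sup>2\<close>.\<close>
lemma dissipative_shadowing:
  assumes x: "is_solution g tau x" and y: "pseudosolution g tau y y'"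
    and defect: "\<And>t. t \<in> dom_int tau \<Longrightarrow> \<bar>y' t - g t (y t)\<bar> \<le> eps"
    and start: "x 0 = y 0" and a: "0 < a" and eps: "0 \<le> eps"
    and diss: "\<And>t. t \<in> dom_int tau \<Longrightarrow>
                 (g t (x t) - g t (y t)) * (x t - y t) \<le> - a * (x t - y t)^2"
    and t: "t \<in> dom_int tau"
  shows "\<bar>x t - y t\<bar> \<le> eps / a"
proof -
  let ?w = "\<lambda>t. (x t - y t)^2"
  have der: "(?w has_real_derivative 2 * (x s - y s) * (g s (x s) - y' s)) (at s within dom_int tau)"
    if "s \<in> dom_int tau" for s
    using that x y unfolding is_solution_def pseudosolution_def C1_on_int_def
    by (auto intro!: derivative_eq_intros)
  have "?w t \<le> (eps / a)^2"
  proof (rule dom_int_le_if_deriv_neg_above[OF t der])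
    fix s assume s: "s \<in> dom_int tau" and far: "(eps / a)^2 < ?w s"
    let ?v = "x s - y s"
    have "eps / a < \<bar>?v\<bar>"
      using far a eps power2_le_iff_abs_le[of "eps / a" ?v] by auto
    then have "eps < a * \<bar>?v\<bar>" using a by (simp add: field_simps)
    have "\<bar>?v * (y' s - g s (y s))\<bar> \<le> \<bar>?v\<bar> * eps"
      unfolding abs_mult using defect[OF s] by (rule mult_left_mono) simp
    then have "?v * (y' s - g s (y s)) \<ge> - \<bar>?v\<bar> * eps"
      using abs_ge_minus_self[of "?v * (y' s - g s (y s))"] by linarith
    then have "2 * ?v * (g s (x s) - y' s) \<le> 2 * \<bar>?v\<bar> * (eps - a * \<bar>?v\<bar>)"
      using diss[OF s] by (simp add: algebra_simps power2_eq_square abs_mult_self_eq)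
    also have "\<dots> < 0"
    proof (rule mult_pos_neg)
      show "0 < 2 * \<bar>?v\<bar>" using \<open>eps < a * \<bar>?v\<bar>\<close> eps by (cases "?v = 0") auto
    qed (use \<open>eps < a * \<bar>?v\<bar>\<close> in simp)
    finally show "2 * ?v * (g s (x s) - y' s) < 0" .
  next
    show "?w 0 \<le> (eps / a)^2" using start by simp
  qed
  then show ?thesis using a eps by (simp add: power2_le_iff_abs_le)
qed

definition riccati :: "real \<Rightarrow> real \<Rightarrow> real" where
  "riccati t x = - x - x^2 - 1/4"

lemma riccati_eq: "riccati t x = - ((x + 1/2)^2)"
  unfolding riccati_def by (simp add: algebra_simps power2_eq_square)

lemma riccati_explicit_solution:
  assumes "0 \<le> u\<^sub>0"
  shows "is_solution riccati tau (\<lambda>t. u\<^sub>0 / (1 + u\<^sub>0 * t) - 1/2)"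
  unfolding is_solution_def
proof
  fix t assume "t \<in> dom_int tau"
  then have pos: "0 < 1 + u\<^sub>0 * t" using assms unfolding dom_int_def by (simp add: add_pos_nonneg)
  have "((\<lambda>t. u\<^sub>0 / (1 + u\<^sub>0 * t) - 1/2) has_real_derivative - ((u\<^sub>0 / (1 + u\<^sub>0 * t))^2)) (at t)"
    using pos by (auto intro!: derivative_eq_intros simp: power2_eq_square)
  then show "((\<lambda>t. u\<^sub>0 / (1 + u\<^sub>0 * t) - 1/2) has_real_derivative
              riccati t (u\<^sub>0 / (1 + u\<^sub>0 * t) - 1/2)) (at t within dom_int tau)"
    by (simp add: riccati_eq has_field_derivative_at_within)
qed

lemma riccati_solution_escapes_below:
  assumes x: "is_solution riccati \<infinity> x" and "0 < b"
  shows "\<exists>t\<ge>0. x t < b - 1/2"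
proof (rule ccontr)
  assume "\<not> ?thesis"
  then have above: "b - 1/2 \<le> x t" if "0 \<le> t" for t using that by force
  have D: "dom_int \<infinity> = {0..}" unfolding dom_int_def by auto
  define T where "T = 2 * (x 0 + 1 - b) / b^2"
  have "0 \<le> T" using above[of 0] \<open>0 < b\<close> unfolding T_def by simp
  have "x T + b^2/2 * T \<le> x 0 + b^2/2 * 0"
  proof (rule dom_int_le_if_deriv_neg_above[where tau = \<infinity> and w = "\<lambda>t. x t + b^2/2 * t"
        and w' = "\<lambda>t. riccati t (x t) + b^2/2"])
    show "((\<lambda>t. x t + b^2/2 * t) has_real_derivative riccati t (x t) + b^2/2)
            (at t within dom_int \<infinity>)" if "t \<in> dom_int \<infinity>" for t
      using x that unfolding is_solution_def by (auto intro!: derivative_eq_intros)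
    show "riccati t (x t) + b^2/2 < 0" if "t \<in> dom_int \<infinity>" for t
    proof -
      have "b^2 \<le> (x t + 1/2)^2"
        using above[of t] that \<open>0 < b\<close> D by (intro power_mono) auto
      moreover have "0 < b^2" using \<open>0 < b\<close> by simp
      ultimately show ?thesis unfolding riccati_eq by linarith
    qed
  qed (use \<open>0 \<le> T\<close> D in auto)
  moreover have "b^2/2 * T = x 0 + 1 - b" using \<open>0 < b\<close> unfolding T_def by simp
  ultimately show False using above[OF \<open>0 \<le> T\<close>] by simp
qed

lemma riccati_not_cond_lip_shadowing:
  "\<not> cond_lip_shadowing riccati {-1/2..1/2}"
proof
  assume "cond_lip_shadowing riccati {-1/2..1/2}"
  then obtain eps0 kappa where "0 < eps0" "0 < kappa" and shadow: "\<And>eps tau y y'.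
        0 < eps \<Longrightarrow> eps \<le> eps0 \<Longrightarrow> 0 < tau \<Longrightarrow>
        pseudosolution riccati tau y y' \<Longrightarrow> sigma riccati tau y y' \<le> eps \<Longrightarrow>
        (\<forall>t\<in>dom_int tau. y t \<in> {-1/2..1/2}) \<Longrightarrow>
        \<exists>x. is_solution riccati tau x \<and> (\<forall>t\<in>dom_int tau. \<bar>x t - y t\<bar> \<le> kappa * eps)"
    unfolding cond_lip_shadowing_def by blast
  define d where "d = min (min 1 eps0) (1 / (2 * kappa))"
  have "d \<le> 1 / (2 * kappa)" unfolding d_def by simp
  then have "kappa * d \<le> 1/2" using \<open>0 < kappa\<close> by (simp add: field_simps)
  moreover have "0 < d" "d \<le> 1" "d \<le> eps0"
    using \<open>0 < eps0\<close> \<open>0 < kappa\<close> unfolding d_def by auto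
  ultimately have d: "0 < d" "d \<le> 1" "d \<le> eps0" "kappa * d \<le> 1/2" by auto
  have "d^2 \<le> d" using d by (simp add: power2_eq_square mult_le_cancel_left1)
  then have "d^2 \<le> eps0" using d by linarith
  have "kappa * d^2 \<le> d / 2"
    using mult_right_mono[OF d(4), of d] d(1) by (simp add: power2_eq_square algebra_simps)
  have const: "riccati t (d - 1/2) = - (d^2)" for t by (simp add: riccati_eq)
  have "pseudosolution riccati \<infinity> (\<lambda>_. d - 1/2) (\<lambda>_. 0)"
    and "sigma riccati \<infinity> (\<lambda>_. d - 1/2) (\<lambda>_. 0) \<le> d^2"
    using pseudosolution_const[of \<infinity> riccati "d - 1/2" "- (d^2)"] const by simp_all
  moreover have "\<forall>t\<in>dom_int \<infinity>. d - 1/2 \<in> {-1/2..1/2::real}" using d by simp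
  ultimately have "\<exists>x. is_solution riccati \<infinity> x \<and>
                      (\<forall>t\<in>dom_int \<infinity>. \<bar>x t - (d - 1/2)\<bar> \<le> kappa * d^2)"
    using d \<open>d^2 \<le> eps0\<close> by (intro shadow) simp_all
  then obtain x where x: "is_solution riccati \<infinity> x"
    and close: "\<And>t. t \<in> dom_int \<infinity> \<Longrightarrow> \<bar>x t - (d - 1/2)\<bar> \<le> kappa * d^2"
    by blast
  have "d/2 - 1/2 \<le> x t" if "0 \<le> t" for t
    using close[of t] that \<open>kappa * d^2 \<le> d / 2\<close> unfolding dom_int_def by auto
  then show False using riccati_solution_escapes_below[OF x, of "d/2"] d(1) by fastforce
qed

lemma riccati_cond_lip_shadowing:
  assumes "0 < rho" "rho < 1/2"
  shows "cond_lip_shadowing riccati {-rho..rho}"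
proof -
  define a where "a = 1/2 - rho"
  have "0 < a" using assms unfolding a_def by simp
  have "\<forall>eps tau y y'. 0 < eps \<and> eps \<le> 1 \<and> 0 < tau \<and> pseudosolution riccati tau y y' \<and>
          sigma riccati tau y y' \<le> eps \<and> (\<forall>t\<in>dom_int tau. y t \<in> {-rho..rho}) \<longrightarrow>
          (\<exists>x. is_solution riccati tau x \<and> (\<forall>t\<in>dom_int tau. \<bar>x t - y t\<bar> \<le> 1 / a * eps))"
  proof (intro allI impI, elim conjE)
    fix eps tau y y'
    assume "0 < eps" "eps \<le> 1" "0 < tau" and y: "pseudosolution riccati tau y y'"
      and "sigma riccati tau y y' \<le> eps" and H: "\<forall>t\<in>dom_int tau. y t \<in> {-rho..rho}"
    have "0 \<in> dom_int tau" using \<open>0 < tau\<close> unfolding dom_int_def by (simp add: zero_ereal_def)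
    have ya: "a \<le> y t + 1/2" if "t \<in> dom_int tau" for t using H that unfolding a_def by force
    define x where "x t = (y 0 + 1/2) / (1 + (y 0 + 1/2) * t) - 1/2" for t
    have x: "is_solution riccati tau x"
      unfolding x_def[abs_def] using ya[OF \<open>0 \<in> dom_int tau\<close>] \<open>0 < a\<close>
      by (intro riccati_explicit_solution) simp
    have "\<bar>x t - y t\<bar> \<le> eps / a" if t: "t \<in> dom_int tau" for t
    proof (rule dissipative_shadowing[OF x y _ _ \<open>0 < a\<close> _ _ t])
      show "\<bar>y' s - riccati s (y s)\<bar> \<le> eps" if "s \<in> dom_int tau" for s
        using pseudosolution_defect_le_sigma[OF y that] \<open>sigma riccati tau y y' \<le> eps\<close> by simp
      show "(riccati s (x s) - riccati s (y s)) * (x s - y s) \<le> - a * (x s - y s)^2"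
        if s: "s \<in> dom_int tau" for s
      proof -
        have "0 < 1 + (y 0 + 1/2) * s"
          using ya[OF \<open>0 \<in> dom_int tau\<close>] \<open>0 < a\<close> s unfolding dom_int_def
          by (simp add: add_pos_nonneg)
        then have "0 < x s + 1/2" using ya[OF \<open>0 \<in> dom_int tau\<close>] \<open>0 < a\<close> by (simp add: x_def)
        then have "a * (x s - y s)^2 \<le> (x s + y s + 1) * (x s - y s)^2"
          using ya[OF s] by (intro mult_right_mono) auto
        moreover have "(riccati s (x s) - riccati s (y s)) * (x s - y s)
                         = - ((x s + y s + 1) * (x s - y s)^2)"
          by (simp add: riccati_eq power2_eq_square algebra_simps)
        ultimately show ?thesis unfolding mult_minus_left by linarith
      qed
    next
      show "x 0 = y 0" by (simp add: x_def)
    next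
      show "0 \<le> eps" using \<open>0 < eps\<close> by simp
    qed
    with x show "\<exists>x. is_solution riccati tau x \<and> (\<forall>t\<in>dom_int tau. \<bar>x t - y t\<bar> \<le> 1 / a * eps)"
      by auto
  qed
  moreover have "{-rho..rho} \<noteq> {}" using assms by simp
  ultimately show ?thesis
    unfolding cond_lip_shadowing_def using \<open>0 < a\<close>
    by (intro conjI exI[of _ "1::real"] exI[of _ "1/a"]) simp_all
qed

theorem mainTheorem6:
  defines "g \<equiv> (\<lambda>(t::real) (x::real). - x - x^2 - 1/4)"
  shows "\<not> cond_lip_shadowing g {-1/2..1/2} \<and>
         \<not> cond_lip_shadowing g {-1/2..} \<and>
         (\<forall>rho::real. 0 < rho \<and> rho < 1/2 \<longrightarrow> cond_lip_shadowing g {-rho..rho})"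
proof -
  have g: "g = riccati" unfolding g_def by (intro ext) (simp add: riccati_def)
  have "\<not> cond_lip_shadowing riccati {-1/2..}"
    using cond_lip_shadowing_subset[of riccati "{-1/2..}" "{-1/2..1/2}"]
      riccati_not_cond_lip_shadowing by auto
  then show ?thesis
    unfolding g using riccati_not_cond_lip_shadowing riccati_cond_lip_shadowing by blast
qed

end
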